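(* Let $n_1,n_2,n_3$ be integers and $\ell$ a positive integer with $n_1^2+n_2^2+n_3^2=\ell^2$. If $P=(x,y,z)\in\mathbb{Z}^3$ satisfies $n_1x+n_2y+n_3z=0$, then $x^2+y^2+z^2$ is a sum of two squares of integers. *)

theory Defs
  imports Main
begin

end

theory Submission
  imports Defs
begin

text \<open>Work in \<open>\<int>\<^sup>4\<close> with the Lorentz form \<open>\<langle>u, v\<rangle> = u1 v1 + u2 v2 + u3 v3 - u4 v4\<close>.
  The hypotheses say that \<open>(n, l)\<close> is a null vector orthogonal to \<open>(x, y, z, 0)\<close>, and we show
  more generally that any \<open>v\<close> orthogonal to a null vector with positive last coordinate has
  \<open>\<langle>v, v\<rangle>\<close> a sum of two squares. Reflections in vectors of norm 2 are integral isometries;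
  reflecting in \<open>(\<plusminus>1, \<plusminus>1, \<plusminus>1, 1)\<close> with the signs of \<open>n\<close> strictly lowers \<open>l\<close> until
  \<open>n\<close> lies on a coordinate axis, where \<open>v = (x, y, z, \<plusminus>x)\<close> (say) and \<open>\<langle>v, v\<rangle> = y\<^sup>2 + z\<^sup>2\<close>.\<close>

type_synonym lvec = "int \<times> int \<times> int \<times> int"

fun lorentz :: "lvec \<Rightarrow> lvec \<Rightarrow> int" where
  "lorentz (u1, u2, u3, u4) (v1, v2, v3, v4) = u1 * v1 + u2 * v2 + u3 * v3 - u4 * v4"

fun reflect :: "lvec \<Rightarrow> lvec \<Rightarrow> lvec" where
  "reflect (s1, s2, s3, s4) (v1, v2, v3, v4) =
     (let c = lorentz (v1, v2, v3, v4) (s1, s2, s3, s4)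
      in (v1 - c * s1, v2 - c * s2, v3 - c * s3, v4 - c * s4))"

lemma lorentz_reflect:
  assumes "lorentz s s = 2"
  shows "lorentz (reflect s u) (reflect s v) = lorentz u v"
proof -
  obtain s1 s2 s3 s4 where s: "s = (s1, s2, s3, s4)" by (cases s) auto
  obtain u1 u2 u3 u4 where u: "u = (u1, u2, u3, u4)" by (cases u) auto
  obtain v1 v2 v3 v4 where v: "v = (v1, v2, v3, v4)" by (cases v) auto
  define a where "a = lorentz u s"
  define b where "b = lorentz v s"
  have "lorentz (reflect s u) (reflect s v) = lorentz u v + a * b * (lorentz s s - 2)"
    unfolding a_def b_def s u v by (simp add: Let_def algebra_simps)
  with assms show ?thesis by simp
qed

lemma norm_le_sum_abs:
  fixes n1 n2 n3 l :: int
  assumes "n1^2 + n2^2 + n3^2 = l^2" "0 \<le> l"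
  shows "l \<le> \<bar>n1\<bar> + \<bar>n2\<bar> + \<bar>n3\<bar>"
proof (rule power2_le_imp_le)
  have "(\<bar>n1\<bar> + \<bar>n2\<bar> + \<bar>n3\<bar>)^2
      = l^2 + 2 * (\<bar>n1\<bar> * \<bar>n2\<bar> + \<bar>n1\<bar> * \<bar>n3\<bar> + \<bar>n2\<bar> * \<bar>n3\<bar>)"
    using assms(1) by (simp add: power2_eq_square algebra_simps)
  then show "l^2 \<le> (\<bar>n1\<bar> + \<bar>n2\<bar> + \<bar>n3\<bar>)^2" by simp
qed simp

lemma sum_abs_less_double_norm:
  fixes n1 n2 n3 l :: int
  assumes "n1^2 + n2^2 + n3^2 = l^2" "0 < l"
  shows "\<bar>n1\<bar> + \<bar>n2\<bar> + \<bar>n3\<bar> < 2 * l"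
proof (rule power2_less_imp_less)
  have "3 * l^2 - (\<bar>n1\<bar> + \<bar>n2\<bar> + \<bar>n3\<bar>)^2
      = (\<bar>n1\<bar> - \<bar>n2\<bar>)^2 + (\<bar>n1\<bar> - \<bar>n3\<bar>)^2 + (\<bar>n2\<bar> - \<bar>n3\<bar>)^2"
    unfolding assms(1)[symmetric] by (simp add: power2_eq_square algebra_simps)
  then have "(\<bar>n1\<bar> + \<bar>n2\<bar> + \<bar>n3\<bar>)^2 \<le> 3 * l^2"
    by (smt (verit) zero_le_power2)
  also have "\<dots> < (2 * l)^2" using assms(2) by (simp add: power2_eq_square)
  finally show "(\<bar>n1\<bar> + \<bar>n2\<bar> + \<bar>n3\<bar>)^2 < (2 * l)^2" .
qed (use assms(2) in simp)

lemma sum_abs_eq_norm_imp_axis: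
  fixes n1 n2 n3 :: int
  assumes "n1^2 + n2^2 + n3^2 = (\<bar>n1\<bar> + \<bar>n2\<bar> + \<bar>n3\<bar>)^2"
  shows "n2 = 0 \<and> n3 = 0 \<or> n1 = 0 \<and> n3 = 0 \<or> n1 = 0 \<and> n2 = 0"
proof -
  have "\<bar>n1\<bar> * \<bar>n2\<bar> + \<bar>n1\<bar> * \<bar>n3\<bar> + \<bar>n2\<bar> * \<bar>n3\<bar> = 0"
    using assms by (simp add: power2_eq_square algebra_simps)
  then have "\<bar>n1\<bar> * \<bar>n2\<bar> = 0" "\<bar>n1\<bar> * \<bar>n3\<bar> = 0" "\<bar>n2\<bar> * \<bar>n3\<bar> = 0"
    by (smt (verit) abs_ge_zero mult_nonneg_nonneg)+
  then show ?thesis by auto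
qed

lemma square_eq_of_mult_eq:
  fixes n l x w :: int
  assumes "n^2 = l^2" "l \<noteq> 0" "n * x = l * w"
  shows "x^2 = w^2"
proof -
  have "l^2 * x^2 = l^2 * w^2"
    using assms(1) arg_cong[OF assms(3), of "\<lambda>t. t^2"] by (simp add: power_mult_distrib)
  then show ?thesis using assms(2) by simp
qed

lemma axis_null_orthogonal_lorentz_sum_two_squares:
  fixes n1 n2 n3 l :: int
  assumes "lorentz (n1, n2, n3, l) (n1, n2, n3, l) = 0" "lorentz (n1, n2, n3, l) v = 0"
    and "l \<noteq> 0" "\<bar>n1\<bar> + \<bar>n2\<bar> + \<bar>n3\<bar> = l"
  shows "\<exists>a b. lorentz v v = a^2 + b^2"
proof -
  obtain x y z w where v: "v = (x, y, z, w)" by (cases v) auto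
  have norm: "n1^2 + n2^2 + n3^2 = l^2" and orth: "n1 * x + n2 * y + n3 * z = l * w"
    using assms(1,2) unfolding v by (simp_all add: power2_eq_square)
  have "n1^2 + n2^2 + n3^2 = (\<bar>n1\<bar> + \<bar>n2\<bar> + \<bar>n3\<bar>)^2"
    using norm assms(4) by simp
  then consider "n2 = 0" "n3 = 0" | "n1 = 0" "n3 = 0" | "n1 = 0" "n2 = 0"
    using sum_abs_eq_norm_imp_axis by blast
  then have "x^2 = w^2 \<or> y^2 = w^2 \<or> z^2 = w^2"
  proof cases
    case 1
    then show ?thesis using square_eq_of_mult_eq[of n1 l x w] norm orth assms(3) by simp
  next
    case 2
    then show ?thesis using square_eq_of_mult_eq[of n2 l y w] norm orth assms(3) by simp
  next
    case 3
    then show ?thesis using square_eq_of_mult_eq[of n3 l z w] norm orth assms(3) by simp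
  qed
  then have "lorentz v v = y^2 + z^2 \<or> lorentz v v = x^2 + z^2 \<or> lorentz v v = x^2 + y^2"
    unfolding v by (auto simp: power2_eq_square)
  then show ?thesis by blast
qed

text \<open>Descent: reflecting in \<open>s = (\<plusminus>1, \<plusminus>1, \<plusminus>1, 1)\<close>, with the signs of \<open>n\<close>,
  replaces \<open>l\<close> by \<open>2 l - (\<bar>n1\<bar> + \<bar>n2\<bar> + \<bar>n3\<bar>)\<close>, which is positive and, unless
  \<open>n\<close> lies on an axis, smaller than \<open>l\<close>.\<close>

lemma null_orthogonal_lorentz_sum_two_squares:
  fixes n1 n2 n3 l :: int
  assumes "0 < l" "lorentz (n1, n2, n3, l) (n1, n2, n3, l) = 0" "lorentz (n1, n2, n3, l) v = 0"
  shows "\<exists>a b. lorentz v v = a^2 + b^2"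
  using assms
proof (induction "nat l" arbitrary: n1 n2 n3 l v rule: less_induct)
  case less
  define sign :: "int \<Rightarrow> int" where "sign t = (if 0 \<le> t then 1 else -1)" for t
  define s :: lvec where "s = (sign n1, sign n2, sign n3, 1)"
  define k where "k = \<bar>n1\<bar> + \<bar>n2\<bar> + \<bar>n3\<bar> - l"
  have norm: "n1^2 + n2^2 + n3^2 = l^2"
    using less.prems(2) by (simp add: power2_eq_square)
  have "lorentz s s = 2" unfolding s_def sign_def by simp
  have k_eq: "lorentz (n1, n2, n3, l) s = k" unfolding s_def sign_def k_def by simp
  show ?case
  proof (cases "k = 0")
    case True
    then show ?thesis
      using axis_null_orthogonal_lorentz_sum_two_squares less.prems k_def by simp
  next
    case False
    define n' where "n' = reflect s (n1, n2, n3, l)"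
    have n': "n' = (n1 - k * sign n1, n2 - k * sign n2, n3 - k * sign n3, l - k)"
      unfolding n'_def s_def reflect.simps Let_def k_eq[unfolded s_def] by simp
    have "0 < k" using False norm_le_sum_abs[OF norm] less.prems(1) k_def by simp
    moreover have "k < l" using sum_abs_less_double_norm[OF norm less.prems(1)] k_def by simp
    ultimately have "nat (l - k) < nat l" "0 < l - k" by simp_all
    moreover have "lorentz n' n' = 0" "lorentz n' (reflect s v) = 0"
      unfolding n'_def lorentz_reflect[OF \<open>lorentz s s = 2\<close>] using less.prems by simp_all
    ultimately obtain a b where "lorentz (reflect s v) (reflect s v) = a^2 + b^2"
      using less.hyps unfolding n' by blast
    then show ?thesis using lorentz_reflect[OF \<open>lorentz s s = 2\<close>] by metis
  qed
qed

theorem corollary2p6: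
  fixes n1 n2 n3 x y z :: int and l :: nat
  assumes "l > 0"
    and "n1^2 + n2^2 + n3^2 = (int l)^2"
    and "n1 * x + n2 * y + n3 * z = 0"
  shows "\<exists>a b :: int. x^2 + y^2 + z^2 = a^2 + b^2"
  using null_orthogonal_lorentz_sum_two_squares[of "int l" n1 n2 n3 "(x, y, z, 0)"] assms
  by (simp add: power2_eq_square)

end
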